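(* In the packet-skipping model with parameters $\lambda,\mu>0$, $d>0$, $\theta\in[0,d]$, the expected length of a buffer clearance period is $$\mathbb{E}[T]=\frac{1-e^{-(\lambda+\mu)(d-\theta)}}{\mu+\lambda e^{-(\lambda+\mu)(d-\theta)}}.$$
   Context: Packet-skipping model: a single server with one extra waiting ("buffer") position. Packets arrive according to a Poisson process of rate $\lambda$; service times are i.i.d. exponential with rate $\mu$, independent of arrivals; service is non-preemptive. A packet arriving to an empty system immediately enters service. A packet arriving while the server is busy is placed in the buffer; if the buffer already holds a packet, that packet is discarded and replaced by the new one. Each packet arriving at time $s$ has absolute deadline $s+d$; its lead-time at time $u$ is $s+d-u$. With threshold $\theta\in[0,d]$, a buffered packet is removed (never served) as soon as its lead-time drops below $\theta$, i.e. once it has waited $d-\theta$ in the buffer; otherwise it enters service when the server becomes free. A buffer clearance period is a maximal time interval during which the buffer is continuously occupied (it starts when a packet enters an empty buffer while the server is busy, and ends when the buffer becomes empty, either because the buffered packet enters service or because it is removed by the threshold rule); $T$ denotes its length. *)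

theory Defs
  imports "HOL-Probability.Probability"
begin

text \<open>Time 0 is the start of the period (a packet has just entered the empty buffer
  while the server is busy).  \<open>s\<close> is the residual service time of the packet in
  service, \<open>a k\<close> is the (k+1)-st interarrival time after time 0 (so the k-th
  arrival after time 0 happens at time a 0 + ... + a (k-1)), and \<open>w = d - \<theta>\<close> is the
  maximal waiting time in the buffer.  Every arrival replaces the buffered packet,
  restarting its waiting clock; the buffered packet is removed at the first time
  a buffered packet has waited w without being replaced, i.e. at time
  (a 0 + ... + a (N-1)) + w with N the first index with a N > w.\<close>

definition removal_time :: "real \<Rightarrow> (nat \<Rightarrow> real) \<Rightarrow> real" where
  "removal_time w a = (let N = (LEAST k. a k > w) in (\<Sum>i<N. a i) + w)"

definition clearance_length :: "real \<Rightarrow> real \<Rightarrow> (nat \<Rightarrow> real) \<Rightarrow> real" where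
  "clearance_length w s a = min s (removal_time w a)"

end

theory Submission
  imports Defs
begin

text \<open>The removal time R depends on the interarrival times only, so it is independent of the
  residual service time S, and Tonelli's theorem gives
  E[min(S, R)] = \<integral> P(S > t) P(R > t) dt over t \<ge> 0 = (1 - E[exp(-\<mu> R)]) / \<mu>.
  For the Laplace transform of R, split according to the index n of the first interarrival
  time exceeding w = d - \<theta>: on that event the discount exp(-c(R - w)) is a product of
  independent factors, so E[exp(-c R)] is a geometric series with ratio
  E[exp(-c A); A \<le> w] = \<lambda>/(\<lambda>+c) (1 - exp(-(\<lambda>+c) w)) and final term P(A > w) = exp(-\<lambda> w).\<close>

lemma nn_integral_exp_neg_Icc:
  fixes c r :: real
  assumes "c > 0" "r \<ge> 0"
  shows "(\<integral>\<^sup>+x. ennreal (exp (- c * x)) * indicator {0..r} x \<partial>lborel) = ennreal ((1 - exp (- c * r)) / c)"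
proof -
  have "((\<lambda>x. exp (- c * x)) has_integral (- exp (- c * r) / c - (- exp (- c * 0) / c))) {0..r}"
    using assms
    by (intro fundamental_theorem_of_calculus)
       (auto intro!: derivative_eq_intros simp: has_real_derivative_iff_has_vector_derivative[symmetric])
  then have "((\<lambda>x. exp (- c * x)) has_integral ((1 - exp (- c * r)) / c)) {0..r}"
    by (simp add: diff_divide_distrib)
  from nn_integral_has_integral_lebesgue[OF _ this] show ?thesis
    by (simp add: indicator_mult_ennreal mult.commute)
qed

lemma nn_integral_exp_neg_Ico:
  fixes c r :: real
  assumes "c > 0"
  shows "(\<integral>\<^sup>+x. ennreal (exp (- c * x)) * indicator {0..<r} x \<partial>lborel) = ennreal ((1 - exp (- c * r)) / c)"
proof (cases "r \<ge> 0")
  case True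
  have "(\<integral>\<^sup>+x. ennreal (exp (- c * x)) * indicator {0..<r} x \<partial>lborel)
      = (\<integral>\<^sup>+x. ennreal (exp (- c * x)) * indicator {0..r} x \<partial>lborel)"
    by (rule nn_integral_cong_AE) (use AE_lborel_singleton[of r] in \<open>auto simp: indicator_def\<close>)
  with nn_integral_exp_neg_Icc[OF assms True] show ?thesis by simp
next
  case False
  then have "(1 - exp (- c * r)) / c \<le> 0"
    using assms by (intro divide_nonpos_pos) (auto simp: mult_pos_neg less_imp_le)
  then show ?thesis using False by (simp add: ennreal_neg)
qed

lemma (in prob_space) AE_exponential_pos:
  assumes "distributed M lborel X (exponential_density l)" "0 < l"
  shows "AE \<omega> in M. 0 < X \<omega>"
  using AE_prob_1[of "{\<omega>\<in>space M. 0 < X \<omega>}"] exponential_distributedD_gt[OF assms(1) order_refl assms(2)]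
  by (auto elim: eventually_mono)

lemma borel_measurable_indicator_Ico[measurable]:
  fixes f g :: "'a \<Rightarrow> real"
  assumes [measurable]: "f \<in> borel_measurable M" "g \<in> borel_measurable M"
  shows "(\<lambda>x. indicator {0..<f x} (g x) :: ennreal) \<in> borel_measurable M"
proof -
  have "(\<lambda>x. indicator {0..<f x} (g x) :: ennreal) = (\<lambda>x. if 0 \<le> g x \<and> g x < f x then 1 else 0)"
    by (auto simp: indicator_def)
  also have "\<dots> \<in> borel_measurable M"
    by measurable
  finally show ?thesis .
qed

lemma (in prob_space) indep_sets_reindex:
  assumes "inj_on f I" "indep_sets F (f ` I)"
  shows "indep_sets (\<lambda>i. F (f i)) I"
  unfolding indep_sets_def
proof (intro conjI ballI allI impI)
  show "F (f i) \<subseteq> events" if "i \<in> I" for i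
    using assms(2) that by (auto simp: indep_sets_def)
  fix J A assume J: "J \<subseteq> I" "J \<noteq> {}" "finite J" and A: "A \<in> Pi J (\<lambda>i. F (f i))"
  have inj: "inj_on f J" using assms(1) J(1) by (rule inj_on_subset)
  define B where "B j = A (the_inv_into J f j)" for j
  have B: "B (f j) = A j" if "j \<in> J" for j
    using that inj by (simp add: B_def the_inv_into_f_f)
  have "prob (\<Inter>j\<in>f ` J. B j) = (\<Prod>j\<in>f ` J. prob (B j))"
    by (rule indep_setsD[OF assms(2)]) (use J A in \<open>auto simp: B\<close>)
  then show "prob (\<Inter>j\<in>J. A j) = (\<Prod>j\<in>J. prob (A j))"
    using inj by (simp add: prod.reindex B)
qed

lemma (in prob_space) indep_vars_reindex:
  assumes "inj_on f I" "indep_vars M' X (f ` I)"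
  shows "indep_vars (\<lambda>i. M' (f i)) (\<lambda>i. X (f i)) I"
  using assms(2) indep_sets_reindex[OF assms(1), of "\<lambda>i. {X i -` A \<inter> space M |A. A \<in> sets (M' i)}"]
  unfolding indep_vars_def2 by simp

lemma borel_measurable_removal_time[measurable]:
  fixes a :: "nat \<Rightarrow> 'b \<Rightarrow> real"
  assumes [measurable]: "\<And>k. a k \<in> borel_measurable N"
  shows "(\<lambda>x. removal_time w (\<lambda>k. a k x)) \<in> borel_measurable N"
proof -
  have "(\<lambda>x. LEAST k. w < a k x) \<in> measurable N (count_space UNIV)" by measurable
  then have "(\<lambda>x. (\<lambda>n x. (\<Sum>i<n. a i x) + w) (LEAST k. w < a k x) x) \<in> borel_measurable N"
    by (rule measurable_compose_countable[rotated]) measurable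
  then show ?thesis unfolding removal_time_def Let_def by simp
qed

lemma (in prob_space) AE_removal_time_nonneg:
  fixes A :: "nat \<Rightarrow> 'a \<Rightarrow> real"
  assumes "\<And>k. distributed M lborel (A k) (exponential_density lam)" "0 < lam" "0 \<le> w"
  shows "AE \<omega> in M. 0 \<le> removal_time w (\<lambda>k. A k \<omega>)"
proof -
  have "AE \<omega> in M. \<forall>k. 0 < A k \<omega>"
    by (simp add: AE_all_countable AE_exponential_pos[OF assms(1,2)])
  then show ?thesis
    by eventually_elim (simp add: removal_time_def assms(3) less_imp_le add_nonneg_nonneg sum_nonneg)
qed

lemma (in prob_space) indep_var_removal_time:
  assumes "indep_vars (\<lambda>_. borel) X UNIV"
  shows "indep_var borel (X None) borel (\<lambda>\<omega>. removal_time w (\<lambda>k. X (Some k) \<omega>))"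
proof -
  have indep: "indep_var (PiM {None} (\<lambda>_. borel)) (\<lambda>\<omega>. restrict (\<lambda>i. X i \<omega>) {None})
      (PiM (range Some) (\<lambda>_. borel)) (\<lambda>\<omega>. restrict (\<lambda>i. X i \<omega>) (range Some))"
    by (rule indep_var_restrict[OF assms]) auto
  have [measurable]: "(\<lambda>g. g i) \<in> measurable (PiM I (\<lambda>_. borel)) (borel :: real measure)"
    if "i \<in> I" for i :: "nat option" and I
    using that by (rule measurable_component_singleton)
  have "(\<lambda>g. g None) \<in> measurable (PiM {None} (\<lambda>_. borel)) (borel :: real measure)"
    "(\<lambda>g. removal_time w (\<lambda>k. g (Some k))) \<in> measurable (PiM (range Some) (\<lambda>_. borel)) borel"
    by measurable
  from indep_var_compose[OF indep this] show ?thesis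
    by (simp add: comp_def)
qed

definition long_gap_discount :: "real \<Rightarrow> real \<Rightarrow> (nat \<Rightarrow> real) \<Rightarrow> ennreal" where
  "long_gap_discount w c a =
    (if \<exists>k. w < a k then ennreal (exp (- c * (\<Sum>i<(LEAST k. w < a k). a i))) else 0)"

definition first_gap_factor :: "real \<Rightarrow> real \<Rightarrow> nat \<Rightarrow> nat \<Rightarrow> real \<Rightarrow> ennreal" where
  "first_gap_factor w c n k x =
    (if k < n then ennreal (exp (- c * x)) * indicator {..w} x else indicator {w<..} x)"

lemma borel_measurable_first_gap_factor[measurable]: "first_gap_factor w c n k \<in> borel_measurable borel"
  unfolding first_gap_factor_def by measurable

lemma prod_first_gap_factor:
  "(\<Prod>k\<le>n. first_gap_factor w c n k (a k)) =
    (if (\<exists>k. w < a k) \<and> n = (LEAST k. w < a k) then ennreal (exp (- c * (\<Sum>i<n. a i))) else 0)"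
proof (cases "\<exists>k<n. w < a k")
  case True
  then obtain k where k: "k < n" "w < a k" by auto
  then have "(LEAST k. w < a k) < n" by (meson Least_le le_less_trans)
  moreover have "first_gap_factor w c n k (a k) = 0" using k by (simp add: first_gap_factor_def)
  ultimately show ?thesis using k by (auto intro!: prod_zero bexI[where x=k])
next
  case no_earlier_gap: False
  show ?thesis
  proof (cases "w < a n")
    case True
    have "(LEAST k. w < a k) = n"
      using no_earlier_gap True by (intro Least_equality) (auto simp: not_less[symmetric])
    moreover have "(\<Prod>k\<le>n. first_gap_factor w c n k (a k)) = (\<Prod>k<n. ennreal (exp (- c * a k)))"
      using no_earlier_gap True
      by (auto simp: lessThan_Suc_atMost[symmetric] first_gap_factor_def indicator_def intro!: prod.cong)
    ultimately show ?thesis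
      using True by (auto simp: prod_ennreal exp_sum[symmetric] sum_distrib_left sum_negf)
  next
    case False
    then have "first_gap_factor w c n n (a n) = 0" by (simp add: first_gap_factor_def)
    moreover have "\<not> ((\<exists>k. w < a k) \<and> n = (LEAST k. w < a k))"
      using False by (metis (mono_tags, lifting) LeastI)
    ultimately show ?thesis by (auto intro!: prod_zero bexI[where x=n])
  qed
qed

lemma long_gap_discount_eq_suminf:
  "long_gap_discount w c a = (\<Sum>n. \<Prod>k\<le>n. first_gap_factor w c n k (a k))"
proof (cases "\<exists>k. w < a k")
  case True
  let ?N = "LEAST k. w < a k"
  have "(\<lambda>n. \<Prod>k\<le>n. first_gap_factor w c n k (a k)) =
      (\<lambda>n. if n = ?N then ennreal (exp (- c * (\<Sum>i<n. a i))) else 0)"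
    using True by (auto simp: prod_first_gap_factor)
  then have "(\<lambda>n. \<Prod>k\<le>n. first_gap_factor w c n k (a k)) sums ennreal (exp (- c * (\<Sum>i<?N. a i)))"
    using sums_single[of ?N "\<lambda>n. ennreal (exp (- c * (\<Sum>i<n. a i)))"] by simp
  then show ?thesis using True by (simp add: sums_iff long_gap_discount_def)
next
  case False
  then show ?thesis by (simp add: prod_first_gap_factor long_gap_discount_def)
qed

lemma (in prob_space) nn_integral_first_gap_factor:
  assumes lam: "lam > 0" and "w \<ge> 0" "c \<ge> 0"
    and X: "distributed M lborel X (exponential_density lam)"
  shows "(\<integral>\<^sup>+\<omega>. first_gap_factor w c n k (X \<omega>) \<partial>M) =
    (if k < n then ennreal (lam / (lam + c) * (1 - exp (- (lam + c) * w))) else ennreal (exp (- w * lam)))"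
proof (cases "k < n")
  case True
  have "(\<integral>\<^sup>+\<omega>. first_gap_factor w c n k (X \<omega>) \<partial>M)
      = (\<integral>\<^sup>+x. ennreal (exponential_density lam x) * first_gap_factor w c n k x \<partial>lborel)"
    by (rule distributed_nn_integral[OF X, symmetric]) simp
  also have "\<dots> = (\<integral>\<^sup>+x. ennreal lam * (ennreal (exp (- (lam + c) * x)) * indicator {0..w} x) \<partial>lborel)"
    using True lam
    by (intro nn_integral_cong)
       (auto simp: first_gap_factor_def exponential_density_def indicator_def
         ennreal_mult'[symmetric] exp_add[symmetric] algebra_simps)
  also have "\<dots> = ennreal lam * ennreal ((1 - exp (- (lam + c) * w)) / (lam + c))"
    using nn_integral_exp_neg_Icc[of "lam + c" w] assms by (simp add: nn_integral_cmult)
  also have "\<dots> = ennreal (lam / (lam + c) * (1 - exp (- (lam + c) * w)))"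
    using lam by (simp add: ennreal_mult'[symmetric])
  finally show ?thesis using True by simp
next
  case False
  have [measurable]: "X \<in> borel_measurable M" using distributed_measurable[OF X] by simp
  have "(\<integral>\<^sup>+\<omega>. first_gap_factor w c n k (X \<omega>) \<partial>M) = emeasure M {\<omega>\<in>space M. w < X \<omega>}"
    using False by (simp add: first_gap_factor_def flip: nn_integral_indicator) (auto intro!: nn_integral_cong simp: indicator_def)
  also have "\<dots> = ennreal (exp (- w * lam))"
    using exponential_distributedD_gt[OF X assms(2) lam] by (simp add: emeasure_eq_measure)
  finally show ?thesis using False by simp
qed

lemma (in prob_space) nn_integral_prod_first_gap_factor:
  fixes A :: "nat \<Rightarrow> 'a \<Rightarrow> real"
  assumes "lam > 0" "w \<ge> 0" "c \<ge> 0"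
    and A: "\<And>k. distributed M lborel (A k) (exponential_density lam)"
    and indep: "indep_vars (\<lambda>_. borel) A UNIV"
  shows "(\<integral>\<^sup>+\<omega>. (\<Prod>k\<le>n. first_gap_factor w c n k (A k \<omega>)) \<partial>M) =
    ennreal ((lam / (lam + c) * (1 - exp (- (lam + c) * w))) ^ n * exp (- w * lam))"
proof -
  have [measurable]: "A k \<in> borel_measurable M" for k
    using distributed_measurable[OF A] by simp
  have "exp (- (lam + c) * w) \<le> 1"
    using assms by (simp add: mult_nonpos_nonneg)
  then have "0 \<le> lam / (lam + c) * (1 - exp (- (lam + c) * w))"
    using assms by simp
  moreover have "(\<integral>\<^sup>+\<omega>. (\<Prod>k\<le>n. first_gap_factor w c n k (A k \<omega>)) \<partial>M)
      = (\<Prod>k\<le>n. \<integral>\<^sup>+\<omega>. first_gap_factor w c n k (A k \<omega>) \<partial>M)"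
    by (intro indep_vars_nn_integral indep_vars_compose2[OF indep_vars_subset[OF indep]]) auto
  ultimately show ?thesis
    using assms
    by (simp add: nn_integral_first_gap_factor lessThan_Suc_atMost[symmetric] prod_ennreal
        ennreal_mult' ennreal_power)
qed

lemma (in prob_space) nn_integral_long_gap_discount:
  fixes A :: "nat \<Rightarrow> 'a \<Rightarrow> real"
  assumes lam: "lam > 0" and w: "w \<ge> 0" and c: "c \<ge> 0"
    and A: "\<And>k. distributed M lborel (A k) (exponential_density lam)"
    and indep: "indep_vars (\<lambda>_. borel) A UNIV"
  shows "(\<integral>\<^sup>+\<omega>. long_gap_discount w c (\<lambda>k. A k \<omega>) \<partial>M) =
    ennreal ((lam + c) * exp (- w * lam) / (c + lam * exp (- (lam + c) * w)))"
proof -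
  have [measurable]: "A k \<in> borel_measurable M" for k
    using distributed_measurable[OF A] by simp
  define E where "E = exp (- (lam + c) * w)"
  define q where "q = lam / (lam + c) * (1 - E)"
  define p where "p = exp (- w * lam)"
  have E: "0 < E" "E \<le> 1"
    using lam c w by (auto simp: E_def mult_nonpos_nonneg)
  have denom: "0 < c + lam * E"
    using lam c E by (simp add: add_nonneg_pos)
  have one_minus_q: "1 - q = (c + lam * E) / (lam + c)"
    using lam c by (simp add: q_def field_simps)
  then have "0 < 1 - q"
    using lam c denom by simp
  then have q: "0 \<le> q" "q < 1"
    using lam c E by (auto simp: q_def)
  have "(\<lambda>n. q ^ n * p) sums (p / (1 - q))"
    using sums_mult2[OF geometric_sums, of q p] q by simp
  then have "(\<lambda>n. ennreal (q ^ n * p)) sums ennreal (p / (1 - q))"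
    using q by (subst sums_ennreal) (auto simp: p_def)
  then have "(\<integral>\<^sup>+\<omega>. long_gap_discount w c (\<lambda>k. A k \<omega>) \<partial>M) = ennreal (p / (1 - q))"
    by (simp add: long_gap_discount_eq_suminf nn_integral_suminf sums_iff q_def p_def E_def
        nn_integral_prod_first_gap_factor[OF assms])
  also have "p / (1 - q) = (lam + c) * exp (- w * lam) / (c + lam * exp (- (lam + c) * w))"
    using lam c denom by (simp add: one_minus_q p_def E_def)
  finally show ?thesis .
qed

lemma (in prob_space) AE_exists_long_gap:
  fixes A :: "nat \<Rightarrow> 'a \<Rightarrow> real"
  assumes lam: "lam > 0" and w: "w \<ge> 0"
    and A: "\<And>k. distributed M lborel (A k) (exponential_density lam)"
    and indep: "indep_vars (\<lambda>_. borel) A UNIV"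
  shows "AE \<omega> in M. \<exists>k. w < A k \<omega>"
proof -
  have [measurable]: "A k \<in> borel_measurable M" for k
    using distributed_measurable[OF A] by simp
  have "emeasure M {\<omega>\<in>space M. \<exists>k. w < A k \<omega>} = (\<integral>\<^sup>+\<omega>. long_gap_discount w 0 (\<lambda>k. A k \<omega>) \<partial>M)"
    by (simp flip: nn_integral_indicator) (auto intro!: nn_integral_cong simp: long_gap_discount_def indicator_def)
  also have "\<dots> = 1"
    using nn_integral_long_gap_discount[OF lam w order_refl A indep] lam by (simp add: mult.commute)
  finally have "prob {\<omega>\<in>space M. \<exists>k. w < A k \<omega>} = 1"
    by (simp add: emeasure_eq_measure)
  from AE_prob_1[OF this] show ?thesis by eventually_elim auto
qed

lemma (in prob_space) expectation_exp_removal_time: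
  fixes A :: "nat \<Rightarrow> 'a \<Rightarrow> real"
  assumes lam: "lam > 0" and w: "w \<ge> 0" and c: "c \<ge> 0"
    and A: "\<And>k. distributed M lborel (A k) (exponential_density lam)"
    and indep: "indep_vars (\<lambda>_. borel) A UNIV"
  shows "(\<integral>\<omega>. exp (- c * removal_time w (\<lambda>k. A k \<omega>)) \<partial>M) =
    (lam + c) * exp (- (lam + c) * w) / (c + lam * exp (- (lam + c) * w))"
proof -
  have [measurable]: "A k \<in> borel_measurable M" for k
    using distributed_measurable[OF A] by simp
  have "AE \<omega> in M. ennreal (exp (- c * removal_time w (\<lambda>k. A k \<omega>))) =
      ennreal (exp (- c * w)) * long_gap_discount w c (\<lambda>k. A k \<omega>)"
    using AE_exists_long_gap[OF lam w A indep]
    by eventually_elim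
       (simp add: long_gap_discount_def removal_time_def Let_def algebra_simps exp_add[symmetric]
         flip: ennreal_mult)
  then have "(\<integral>\<^sup>+\<omega>. ennreal (exp (- c * removal_time w (\<lambda>k. A k \<omega>))) \<partial>M) =
      ennreal (exp (- c * w)) * (\<integral>\<^sup>+\<omega>. long_gap_discount w c (\<lambda>k. A k \<omega>) \<partial>M)"
    by (simp add: nn_integral_cong_AE nn_integral_cmult long_gap_discount_def)
  also have "\<dots> = ennreal (exp (- c * w) * ((lam + c) * exp (- w * lam) / (c + lam * exp (- (lam + c) * w))))"
    using lam c by (simp add: nn_integral_long_gap_discount[OF assms] flip: ennreal_mult)
  also have "exp (- c * w) * ((lam + c) * exp (- w * lam) / (c + lam * exp (- (lam + c) * w)))
      = (lam + c) * exp (- (lam + c) * w) / (c + lam * exp (- (lam + c) * w))"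
    by (simp add: algebra_simps exp_add[symmetric])
  finally show ?thesis
    using lam c by (subst integral_eq_nn_integral) auto
qed

lemma (in prob_space) prob_exponential_tail_indep:
  assumes S: "distributed M lborel S (exponential_density \<mu>)" and \<mu>: "0 < \<mu>"
    and indep: "indep_var borel S borel R" and t: "0 \<le> t"
  shows "prob {\<omega>\<in>space M. t < S \<omega> \<and> t < R \<omega>} = exp (- t * \<mu>) * prob {\<omega>\<in>space M. t < R \<omega>}"
proof -
  have "prob ((\<lambda>\<omega>. (S \<omega>, R \<omega>)) -` ({t<..} \<times> {t<..}) \<inter> space M) =
      prob (S -` {t<..} \<inter> space M) * prob (R -` {t<..} \<inter> space M)"
    by (rule indep_varD[OF indep]) auto
  moreover have "prob (S -` {t<..} \<inter> space M) = exp (- t * \<mu>)"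
    using exponential_distributedD_gt[OF S t \<mu>] by (simp add: vimage_def Int_def conj_commute)
  ultimately show ?thesis
    by (simp add: vimage_def Int_def conj_commute)
qed

lemma (in prob_space) nn_integral_min_exponential:
  assumes S: "distributed M lborel S (exponential_density \<mu>)" and \<mu>: "0 < \<mu>"
    and R[measurable]: "R \<in> borel_measurable M" and indep: "indep_var borel S borel R"
  shows "(\<integral>\<^sup>+\<omega>. ennreal (min (S \<omega>) (R \<omega>)) \<partial>M) = (\<integral>\<^sup>+\<omega>. ennreal ((1 - exp (- \<mu> * R \<omega>)) / \<mu>) \<partial>M)"
proof -
  interpret pair_sigma_finite M lborel ..
  have [measurable]: "S \<in> borel_measurable M"
    using distributed_measurable[OF S] by simp
  have lborel_Ico: "(\<integral>\<^sup>+t. indicator {0..<x} t \<partial>lborel) = ennreal x" for x :: real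
    by (cases "0 \<le> x") (auto simp: ennreal_neg)
  have survival: "(\<integral>\<^sup>+\<omega>. indicator {0..<min (S \<omega>) (R \<omega>)} t \<partial>M) =
      (\<integral>\<^sup>+\<omega>. ennreal (exp (- \<mu> * t)) * indicator {0..<R \<omega>} t \<partial>M)" for t
  proof (cases "0 \<le> t")
    case True
    have "(\<integral>\<^sup>+\<omega>. indicator {0..<min (S \<omega>) (R \<omega>)} t \<partial>M) = emeasure M {\<omega>\<in>space M. t < S \<omega> \<and> t < R \<omega>}"
      using True by (simp flip: nn_integral_indicator) (auto intro!: nn_integral_cong simp: indicator_def)
    also have "\<dots> = ennreal (exp (- \<mu> * t)) * emeasure M {\<omega>\<in>space M. t < R \<omega>}"
      using prob_exponential_tail_indep[OF S \<mu> indep True]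
      by (simp add: emeasure_eq_measure ennreal_mult'' mult.commute)
    also have "emeasure M {\<omega>\<in>space M. t < R \<omega>} = (\<integral>\<^sup>+\<omega>. indicator {0..<R \<omega>} t \<partial>M)"
      using True by (simp flip: nn_integral_indicator) (auto intro!: nn_integral_cong simp: indicator_def)
    also have "ennreal (exp (- \<mu> * t)) * \<dots> = (\<integral>\<^sup>+\<omega>. ennreal (exp (- \<mu> * t)) * indicator {0..<R \<omega>} t \<partial>M)"
      by (rule nn_integral_cmult[symmetric]) measurable
    finally show ?thesis .
  qed (simp add: indicator_def)
  have "(\<integral>\<^sup>+\<omega>. ennreal (min (S \<omega>) (R \<omega>)) \<partial>M)
      = (\<integral>\<^sup>+\<omega>. (\<integral>\<^sup>+t. indicator {0..<min (S \<omega>) (R \<omega>)} t \<partial>lborel) \<partial>M)"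
    by (simp add: lborel_Ico)
  also have "\<dots> = (\<integral>\<^sup>+t. (\<integral>\<^sup>+\<omega>. ennreal (exp (- \<mu> * t)) * indicator {0..<R \<omega>} t \<partial>M) \<partial>lborel)"
    by (subst Fubini'[symmetric]) (simp_all add: split_beta' survival)
  also have "\<dots> = (\<integral>\<^sup>+\<omega>. (\<integral>\<^sup>+t. ennreal (exp (- \<mu> * t)) * indicator {0..<R \<omega>} t \<partial>lborel) \<partial>M)"
    by (rule Fubini') (unfold split_beta', measurable)
  also have "\<dots> = (\<integral>\<^sup>+\<omega>. ennreal ((1 - exp (- \<mu> * R \<omega>)) / \<mu>) \<partial>M)"
    by (intro nn_integral_cong) (rule nn_integral_exp_neg_Ico[OF \<mu>])
  finally show ?thesis .
qed

lemma (in prob_space) expectation_min_exponential: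
  assumes S: "distributed M lborel S (exponential_density \<mu>)" and \<mu>: "0 < \<mu>"
    and R[measurable]: "R \<in> borel_measurable M" and R_nonneg: "AE \<omega> in M. 0 \<le> R \<omega>"
    and indep: "indep_var borel S borel R"
  shows "integrable M (\<lambda>\<omega>. min (S \<omega>) (R \<omega>))"
    and "(\<integral>\<omega>. min (S \<omega>) (R \<omega>) \<partial>M) = (1 - (\<integral>\<omega>. exp (- \<mu> * R \<omega>) \<partial>M)) / \<mu>"
proof -
  have [measurable]: "S \<in> borel_measurable M"
    using distributed_measurable[OF S] by simp
  define g where "g \<omega> = (1 - exp (- \<mu> * R \<omega>)) / \<mu>" for \<omega>
  have exp_bounded: "AE \<omega> in M. 0 < exp (- \<mu> * R \<omega>) \<and> exp (- \<mu> * R \<omega>) \<le> 1"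
    using R_nonneg by eventually_elim (use \<mu> in \<open>simp add: mult_nonneg_nonneg\<close>)
  have int_exp: "integrable M (\<lambda>\<omega>. exp (- \<mu> * R \<omega>))"
    by (rule integrable_const_bound[where B=1]) (use exp_bounded in \<open>auto elim: eventually_mono\<close>)
  have g_nonneg: "AE \<omega> in M. 0 \<le> g \<omega>"
    using exp_bounded by eventually_elim (use \<mu> in \<open>simp add: g_def\<close>)
  have int_g: "integrable M g"
    unfolding g_def by (intro integrable_divide Bochner_Integration.integrable_diff integrable_const int_exp)
  have min_nonneg: "AE \<omega> in M. 0 \<le> min (S \<omega>) (R \<omega>)"
    using AE_exponential_pos[OF S \<mu>] R_nonneg by eventually_elim simp
  have nn_min: "(\<integral>\<^sup>+\<omega>. ennreal (min (S \<omega>) (R \<omega>)) \<partial>M) = ennreal (\<integral>\<omega>. g \<omega> \<partial>M)"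
    using nn_integral_min_exponential[OF S \<mu> R indep] nn_integral_eq_integral[OF int_g g_nonneg]
    by (simp add: g_def)
  show "integrable M (\<lambda>\<omega>. min (S \<omega>) (R \<omega>))"
    by (rule integrableI_nonneg) (use min_nonneg nn_min in auto)
  have "(\<integral>\<omega>. min (S \<omega>) (R \<omega>) \<partial>M) = (\<integral>\<omega>. g \<omega> \<partial>M)"
    using integral_eq_nn_integral[OF _ min_nonneg] nn_min integral_nonneg_AE[OF g_nonneg] by simp
  also have "\<dots> = (1 - (\<integral>\<omega>. exp (- \<mu> * R \<omega>) \<partial>M)) / \<mu>"
    unfolding g_def using int_exp by (simp add: prob_space)
  finally show "(\<integral>\<omega>. min (S \<omega>) (R \<omega>) \<partial>M) = (1 - (\<integral>\<omega>. exp (- \<mu> * R \<omega>) \<partial>M)) / \<mu>" .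
qed

theorem mainTheorem2:
  fixes M :: "'w measure" and lam \<mu> d \<theta> :: real
    and S :: "'w \<Rightarrow> real" and A :: "nat \<Rightarrow> 'w \<Rightarrow> real"
  assumes "prob_space M"
    and "lam > 0" and "\<mu> > 0" and "d > 0" and "0 \<le> \<theta>" and "\<theta> \<le> d"
    and "distributed M lborel S (exponential_density \<mu>)"
    and "\<And>k. distributed M lborel (A k) (exponential_density lam)"
    and "prob_space.indep_vars M (\<lambda>_. borel)
           (\<lambda>i. case i of None \<Rightarrow> S | Some k \<Rightarrow> A k) UNIV"
  shows "integrable M (\<lambda>\<omega>. clearance_length (d - \<theta>) (S \<omega>) (\<lambda>k. A k \<omega>))
    \<and> (\<integral>\<omega>. clearance_length (d - \<theta>) (S \<omega>) (\<lambda>k. A k \<omega>) \<partial>M)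
      = (1 - exp (-(lam + \<mu>) * (d - \<theta>))) / (\<mu> + lam * exp (-(lam + \<mu>) * (d - \<theta>)))"
proof -
  interpret prob_space M by fact
  note lam = \<open>lam > 0\<close> and \<mu> = \<open>\<mu> > 0\<close> and S = \<open>distributed M lborel S _\<close> and A = assms(8)
  define w where "w = d - \<theta>"
  define R where "R \<omega> = removal_time w (\<lambda>k. A k \<omega>)" for \<omega>
  define E where "E = exp (- (lam + \<mu>) * w)"
  have w: "0 \<le> w" using \<open>\<theta> \<le> d\<close> by (simp add: w_def)
  have [measurable]: "A k \<in> borel_measurable M" for k
    using distributed_measurable[OF A] by simp
  have indep_A: "indep_vars (\<lambda>_. borel) A UNIV"
    using indep_vars_reindex[of Some UNIV, OF _ indep_vars_subset[OF assms(9)]] by simp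
  have [measurable]: "R \<in> borel_measurable M"
    unfolding R_def by measurable
  have indep_SR: "indep_var borel S borel R"
    using indep_var_removal_time[OF assms(9), of w] by (simp add: R_def[abs_def])
  have R_nonneg: "AE \<omega> in M. 0 \<le> R \<omega>"
    unfolding R_def using A lam w by (rule AE_removal_time_nonneg)
  have "(\<integral>\<omega>. exp (- \<mu> * R \<omega>) \<partial>M) = (lam + \<mu>) * E / (\<mu> + lam * E)"
    unfolding R_def E_def using lam w less_imp_le[OF \<mu>] A indep_A by (rule expectation_exp_removal_time)
  moreover have "(1 - (lam + \<mu>) * E / (\<mu> + lam * E)) / \<mu> = (1 - E) / (\<mu> + lam * E)"
  proof -
    have "0 < \<mu> + lam * E"
      using lam \<mu> by (simp add: E_def add_pos_pos)
    then have "1 - (lam + \<mu>) * E / (\<mu> + lam * E) = \<mu> * (1 - E) / (\<mu> + lam * E)"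
      by (simp add: field_simps)
    then show ?thesis using \<mu> by simp
  qed
  ultimately show ?thesis
    using expectation_min_exponential[OF S \<mu> _ R_nonneg indep_SR]
    by (simp add: clearance_length_def R_def E_def w_def)
qed

end
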